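(* Let $K\subseteq L$ be an algebraic field extension, let $A$ be a PvMD with quotient field $K$, and let $B\supseteq A$ be an integrally closed essential domain with quotient field $L$. Suppose that $B$ admits an essential representation $\mathcal V$ such that for every $V\in\mathcal V$ the center $\mathfrak m_V\cap A$ of $V$ in $A$ (where $\mathfrak m_V$ is the maximal ideal of $V$) is a $t$-ideal of $A$. Then $B$ is a PvMD.
   Context: All rings are commutative with identity. For an integral domain $D$ with quotient field $F$ and nonzero fractional ideal $I$: $(D:I)=\{x\in F:xI\subseteq D\}$, $I^v=(D:(D:I))$, $I^t=\bigcup\{J^v:J\subseteq I \text{ finitely generated}\}$; $I$ is a $t$-ideal if $I=(0)$ or $I=I^t$; $t$-maximal ideals are $t$-ideals maximal among proper $t$-ideals. $D$ is a PvMD if $D_{\mathfrak m}$ is a valuation domain for all $t$-maximal $\mathfrak m$. A valuation overring of $D$ is essential if it equals $D_{\mathfrak p}$ for a prime $\mathfrak p$ of $D$; an essential representation of $D$ is a family of essential valuation overrings with intersection $D$; $D$ is essential if it has one. *)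

theory Defs
  imports "HOL-Computational_Algebra.Polynomial"
begin

text \<open>Convention: all domains are realised as subrings of an ambient field type 'a.
  A domain D with quotient field F is a subring D of the subfield F with
  F = {a/b | a, b in D, b nonzero}.\<close>

definition subring :: "'a::field set \<Rightarrow> bool" where
  "subring D \<longleftrightarrow> 0 \<in> D \<and> 1 \<in> D \<and> (\<forall>x\<in>D. \<forall>y\<in>D. x + y \<in> D \<and> x - y \<in> D \<and> x * y \<in> D)"

definition subfield :: "'a::field set \<Rightarrow> bool" where
  "subfield F \<longleftrightarrow> subring F \<and> (\<forall>x\<in>F. x \<noteq> 0 \<longrightarrow> inverse x \<in> F)"

definition quotient_field :: "'a::field set \<Rightarrow> 'a set \<Rightarrow> bool" where
  "quotient_field D F \<longleftrightarrow> subring D \<and> subfield F \<and>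
     F = {a / b | a b. a \<in> D \<and> b \<in> D \<and> b \<noteq> 0}"

definition algebraic_ext :: "'a::field set \<Rightarrow> 'a set \<Rightarrow> bool" where
  "algebraic_ext K L \<longleftrightarrow> subfield K \<and> subfield L \<and> K \<subseteq> L \<and>
     (\<forall>x\<in>L. \<exists>p. p \<noteq> 0 \<and> (\<forall>i. coeff p i \<in> K) \<and> poly p x = 0)"

definition integrally_closed :: "'a::field set \<Rightarrow> 'a set \<Rightarrow> bool" where
  "integrally_closed D F \<longleftrightarrow> (\<forall>x\<in>F. (\<exists>p. lead_coeff p = 1 \<and> (\<forall>i. coeff p i \<in> D) \<and> poly p x = 0) \<longrightarrow> x \<in> D)"

definition ideal_of :: "'a::field set \<Rightarrow> 'a set \<Rightarrow> bool" where
  "ideal_of D I \<longleftrightarrow> I \<subseteq> D \<and> 0 \<in> I \<and> (\<forall>x\<in>I. \<forall>y\<in>I. x + y \<in> I) \<and> (\<forall>d\<in>D. \<forall>x\<in>I. d * x \<in> I)"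

definition prime_ideal_of :: "'a::field set \<Rightarrow> 'a set \<Rightarrow> bool" where
  "prime_ideal_of D P \<longleftrightarrow> ideal_of D P \<and> P \<noteq> D \<and> (\<forall>x\<in>D. \<forall>y\<in>D. x * y \<in> P \<longrightarrow> x \<in> P \<or> y \<in> P)"

definition frac_ideal :: "'a::field set \<Rightarrow> 'a set \<Rightarrow> 'a set \<Rightarrow> bool" where
  "frac_ideal D F I \<longleftrightarrow> I \<subseteq> F \<and> 0 \<in> I \<and> (\<forall>x\<in>I. \<forall>y\<in>I. x + y \<in> I) \<and>
     (\<forall>d\<in>D. \<forall>x\<in>I. d * x \<in> I) \<and> (\<exists>d\<in>D. d \<noteq> 0 \<and> (\<forall>x\<in>I. d * x \<in> D))"

definition colon :: "'a::field set \<Rightarrow> 'a set \<Rightarrow> 'a set \<Rightarrow> 'a set" where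
  "colon D F I = {x \<in> F. \<forall>y\<in>I. x * y \<in> D}"

definition v_closure :: "'a::field set \<Rightarrow> 'a set \<Rightarrow> 'a set \<Rightarrow> 'a set" where
  "v_closure D F I = colon D F (colon D F I)"

definition dspan :: "'a::field set \<Rightarrow> 'a set \<Rightarrow> 'a set" where
  "dspan D S = {y. \<exists>c. (\<forall>s\<in>S. c s \<in> D) \<and> y = (\<Sum>s\<in>S. c s * s)}"

definition t_closure :: "'a::field set \<Rightarrow> 'a set \<Rightarrow> 'a set \<Rightarrow> 'a set" where
  "t_closure D F I = \<Union>{v_closure D F (dspan D S) | S. finite S \<and> S \<noteq> {} \<and> S \<subseteq> I - {0}}"

definition t_ideal :: "'a::field set \<Rightarrow> 'a set \<Rightarrow> 'a set \<Rightarrow> bool" where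
  "t_ideal D F I \<longleftrightarrow> I = {0} \<or> (frac_ideal D F I \<and> I \<noteq> {0} \<and> t_closure D F I = I)"

definition t_maximal :: "'a::field set \<Rightarrow> 'a set \<Rightarrow> 'a set \<Rightarrow> bool" where
  "t_maximal D F M \<longleftrightarrow> ideal_of D M \<and> M \<noteq> D \<and> t_ideal D F M \<and>
     (\<forall>J. ideal_of D J \<and> J \<noteq> D \<and> t_ideal D F J \<and> M \<subseteq> J \<longrightarrow> J = M)"

definition localization :: "'a::field set \<Rightarrow> 'a set \<Rightarrow> 'a set" where
  "localization D P = {a / s | a s. a \<in> D \<and> s \<in> D \<and> s \<notin> P}"

definition valuation_domain :: "'a::field set \<Rightarrow> 'a set \<Rightarrow> bool" where
  "valuation_domain V F \<longleftrightarrow> subring V \<and> V \<subseteq> F \<and>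
     (\<forall>x\<in>F. x \<noteq> 0 \<longrightarrow> x \<in> V \<or> inverse x \<in> V)"

definition PvMD :: "'a::field set \<Rightarrow> 'a set \<Rightarrow> bool" where
  "PvMD D F \<longleftrightarrow> quotient_field D F \<and>
     (\<forall>M. t_maximal D F M \<longrightarrow> valuation_domain (localization D M) F)"

definition valuation_overring :: "'a::field set \<Rightarrow> 'a set \<Rightarrow> 'a set \<Rightarrow> bool" where
  "valuation_overring D F V \<longleftrightarrow> D \<subseteq> V \<and> valuation_domain V F"

definition essential_valuation_overring :: "'a::field set \<Rightarrow> 'a set \<Rightarrow> 'a set \<Rightarrow> bool" where
  "essential_valuation_overring D F V \<longleftrightarrow> valuation_overring D F V \<and>
     (\<exists>P. prime_ideal_of D P \<and> V = localization D P)"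

text \<open>Intersection taken inside F (so the empty family has intersection F).\<close>
definition essential_representation :: "'a::field set \<Rightarrow> 'a set \<Rightarrow> 'a set set \<Rightarrow> bool" where
  "essential_representation D F \<V> \<longleftrightarrow> (\<forall>V\<in>\<V>. essential_valuation_overring D F V) \<and>
     F \<inter> \<Inter>\<V> = D"

definition essential_domain :: "'a::field set \<Rightarrow> 'a set \<Rightarrow> bool" where
  "essential_domain D F \<longleftrightarrow> quotient_field D F \<and> (\<exists>\<V>. essential_representation D F \<V>)"

definition max_ideal_val :: "'a::field set \<Rightarrow> 'a set" where
  "max_ideal_val V = {x \<in> V. x = 0 \<or> inverse x \<notin> V}"

end

theory Submission
  imports Defs
begin

text \<open>Let M be a t-maximal ideal of B; we show that x or x\<inverse> lies in B_M for every nonzero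
  x \<in> L. As L is algebraic over K, the contraction M \<inter> A is nonzero. It is contained in a
  t-maximal ideal of A: otherwise some finite S \<subseteq> M \<inter> A has S^v = A over A, and since the
  centers of the valuation rings in the representation are t-ideals, also S^v = B over B,
  contradicting M^t = M \<noteq> B. For such a t-maximal Q, A_Q is a valuation ring contained in B_M.
  Dividing a polynomial of x over K by a coefficient of minimal value gives a relation for x
  over B_M with a unit coefficient, and integral closedness of B then puts x or x\<inverse> into B_M.\<close>

lemma
  assumes "subring D"
  shows subring_zero: "0 \<in> D" and subring_one: "1 \<in> D"
    and subring_add: "x \<in> D \<Longrightarrow> y \<in> D \<Longrightarrow> x + y \<in> D"
    and subring_diff: "x \<in> D \<Longrightarrow> y \<in> D \<Longrightarrow> x - y \<in> D"
    and subring_mult: "x \<in> D \<Longrightarrow> y \<in> D \<Longrightarrow> x * y \<in> D"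
  using assms unfolding subring_def by auto

lemma subring_uminus: "subring D \<Longrightarrow> x \<in> D \<Longrightarrow> - x \<in> D"
  by (metis diff_0 subring_diff subring_zero)

lemma subring_power: "subring D \<Longrightarrow> x \<in> D \<Longrightarrow> x ^ n \<in> D"
  by (induction n) (auto intro: subring_one subring_mult)

lemma subring_sum: "subring D \<Longrightarrow> (\<And>i. i \<in> S \<Longrightarrow> f i \<in> D) \<Longrightarrow> sum f S \<in> D"
  by (induction S rule: infinite_finite_induct) (auto intro: subring_zero subring_add)

lemma subring_poly:
  assumes "subring D" "x \<in> D" shows "(\<forall>i. coeff p i \<in> D) \<Longrightarrow> poly p x \<in> D"
proof (induction p)
  case (pCons a p)
  then have "a \<in> D" "\<forall>i. coeff p i \<in> D" by (metis coeff_pCons_0, metis coeff_pCons_Suc)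
  then show ?case using pCons.IH assms by (simp add: subring_add subring_mult)
qed (simp add: subring_zero assms)

lemma subfield_subring: "subfield F \<Longrightarrow> subring F"
  unfolding subfield_def by auto

lemma subfield_inverse: "subfield F \<Longrightarrow> x \<in> F \<Longrightarrow> inverse x \<in> F"
  unfolding subfield_def by (cases "x = 0") (auto simp: subring_zero)

lemma subfield_divide: "subfield F \<Longrightarrow> x \<in> F \<Longrightarrow> y \<in> F \<Longrightarrow> x / y \<in> F"
  by (simp add: divide_inverse subfield_inverse subfield_subring subring_mult)

lemma quotient_field_subring: "quotient_field D F \<Longrightarrow> subring D"
  unfolding quotient_field_def by auto

lemma quotient_field_subfield: "quotient_field D F \<Longrightarrow> subfield F"
  unfolding quotient_field_def by auto

lemma quotient_field_fraction:
  "quotient_field D F \<Longrightarrow> x \<in> F \<Longrightarrow> \<exists>a b. a \<in> D \<and> b \<in> D \<and> b \<noteq> 0 \<and> x = a / b"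
  unfolding quotient_field_def by blast

lemma quotient_field_subset: assumes "quotient_field D F" shows "D \<subseteq> F"
proof
  fix x assume "x \<in> D"
  moreover have "x = x / 1" "1 \<in> D" by (auto intro: subring_one quotient_field_subring assms)
  ultimately show "x \<in> F" using assms unfolding quotient_field_def by fastforce
qed

lemma quotient_field_mult: "quotient_field D F \<Longrightarrow> x \<in> F \<Longrightarrow> y \<in> F \<Longrightarrow> x * y \<in> F"
  by (meson quotient_field_subfield subfield_subring subring_mult)

lemma colon_antimono: "S \<subseteq> S' \<Longrightarrow> colon D F S' \<subseteq> colon D F S"
  unfolding colon_def by auto

lemma colon_subset: "colon D F S \<subseteq> F"
  unfolding colon_def by auto

lemma v_closure_mono: "S \<subseteq> S' \<Longrightarrow> v_closure D F S \<subseteq> v_closure D F S'"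
  unfolding v_closure_def by (intro colon_antimono)

lemma subset_v_closure: "S \<subseteq> F \<Longrightarrow> S \<subseteq> v_closure D F S"
  unfolding v_closure_def colon_def by (auto simp: mult.commute)

lemma v_closure_idem: assumes "S \<subseteq> F" shows "v_closure D F (v_closure D F S) = v_closure D F S"
proof -
  have "colon D F (v_closure D F S) = colon D F S"
    using colon_antimono[OF subset_v_closure[OF assms]] subset_v_closure[OF colon_subset]
    unfolding v_closure_def by blast
  then show ?thesis unfolding v_closure_def by simp
qed

lemma v_closure_subset_domain:
  assumes "quotient_field D F" "S \<subseteq> D" shows "v_closure D F S \<subseteq> D"
proof -
  have "1 \<in> colon D F S"
    using assms quotient_field_subset subring_one[OF quotient_field_subring]
    unfolding colon_def by fastforce
  then show ?thesis unfolding v_closure_def colon_def by force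
qed

lemma v_closure_zero: "quotient_field D F \<Longrightarrow> 0 \<in> v_closure D F S"
  unfolding v_closure_def colon_def
  by (auto intro: subring_zero quotient_field_subring subfield_subring quotient_field_subfield)

lemma v_closure_add:
  "quotient_field D F \<Longrightarrow> x \<in> v_closure D F S \<Longrightarrow> y \<in> v_closure D F S \<Longrightarrow> x + y \<in> v_closure D F S"
  unfolding v_closure_def colon_def
  by (auto simp: distrib_right intro: subring_add quotient_field_subring subfield_subring quotient_field_subfield)

lemma v_closure_mult:
  assumes "quotient_field D F" "d \<in> D" "x \<in> v_closure D F S" shows "d * x \<in> v_closure D F S"
proof -
  have "d \<in> F" using assms quotient_field_subset by blast
  then show ?thesis using assms subring_mult[OF quotient_field_subring[OF assms(1)]]
    unfolding v_closure_def colon_def by (auto simp: mult.assoc intro: quotient_field_mult[OF assms(1)])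
qed

lemma one_in_v_closure_iff:
  "1 \<in> v_closure D F S \<longleftrightarrow> 1 \<in> F \<and> (\<forall>y\<in>F. (\<forall>s\<in>S. y * s \<in> D) \<longrightarrow> y \<in> D)"
  unfolding v_closure_def colon_def by (auto simp: mult.commute)

lemma subset_dspan: assumes "subring D" "finite S" shows "S \<subseteq> dspan D S"
proof
  fix s assume "s \<in> S"
  then have "(\<Sum>t\<in>S. (if t = s then 1 else 0) * t) = s"
    using assms(2) by (simp add: if_distrib[of "\<lambda>c. c * _"] cong: if_cong)
  then show "s \<in> dspan D S" unfolding dspan_def
    using subring_zero[OF assms(1)] subring_one[OF assms(1)]
    by (intro CollectI exI[of _ "\<lambda>t. if t = s then 1 else 0"]) auto
qed

lemma colon_dspan: assumes "quotient_field D F" "finite S"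
  shows "colon D F (dspan D S) = colon D F S"
proof
  have R: "subring D" using quotient_field_subring[OF assms(1)] .
  show "colon D F (dspan D S) \<subseteq> colon D F S"
    by (rule colon_antimono[OF subset_dspan[OF R assms(2)]])
  show "colon D F S \<subseteq> colon D F (dspan D S)"
  proof
    fix x assume x: "x \<in> colon D F S"
    have "x * y \<in> D" if "y \<in> dspan D S" for y
    proof -
      obtain c where c: "\<forall>s\<in>S. c s \<in> D" "y = (\<Sum>s\<in>S. c s * s)"
        using \<open>y \<in> dspan D S\<close> unfolding dspan_def by blast
      have "x * y = (\<Sum>s\<in>S. c s * (x * s))" by (simp add: c(2) sum_distrib_left ac_simps)
      also have "\<dots> \<in> D"
        using c x subring_mult[OF R] unfolding colon_def by (auto intro: subring_sum[OF R])
      finally show ?thesis .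
    qed
    then show "x \<in> colon D F (dspan D S)" using x unfolding colon_def by auto
  qed
qed

lemma mem_t_closure_iff:
  assumes "quotient_field D F"
  shows "x \<in> t_closure D F I \<longleftrightarrow> (\<exists>S. finite S \<and> S \<noteq> {} \<and> S \<subseteq> I - {0} \<and> x \<in> v_closure D F S)"
  using colon_dspan[OF assms] unfolding t_closure_def v_closure_def by auto

lemma
  assumes "ideal_of D I"
  shows ideal_zero: "0 \<in> I"
    and ideal_add: "x \<in> I \<Longrightarrow> y \<in> I \<Longrightarrow> x + y \<in> I"
    and ideal_mult: "d \<in> D \<Longrightarrow> x \<in> I \<Longrightarrow> d * x \<in> I"
    and ideal_subset: "I \<subseteq> D"
  using assms unfolding ideal_of_def by auto

lemma ideal_eq_if_one: "ideal_of D I \<Longrightarrow> 1 \<in> I \<Longrightarrow> I = D"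
  unfolding ideal_of_def by (metis mult.right_neutral subsetI subset_antisym)

lemma ideal_subset_field: "quotient_field D F \<Longrightarrow> ideal_of D I \<Longrightarrow> I \<subseteq> F"
  using ideal_subset quotient_field_subset by blast

lemma t_closure_subset_domain:
  assumes qf: "quotient_field D F" and I: "ideal_of D I" shows "t_closure D F I \<subseteq> D"
proof
  fix x assume "x \<in> t_closure D F I"
  then obtain S where "S \<subseteq> I" "x \<in> v_closure D F S"
    unfolding mem_t_closure_iff[OF qf] by blast
  then show "x \<in> D" using v_closure_subset_domain[OF qf] ideal_subset[OF I] by blast
qed

lemma subset_t_closure:
  assumes qf: "quotient_field D F" and I: "ideal_of D I" "I \<noteq> {0}" shows "I \<subseteq> t_closure D F I"
proof
  fix x assume x: "x \<in> I"
  obtain z where z: "z \<in> I" "z \<noteq> 0" using I ideal_zero by blast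
  have IF: "I \<subseteq> F" by (rule ideal_subset_field[OF qf I(1)])
  show "x \<in> t_closure D F I"
  proof (cases "x = 0")
    case True
    then have "x \<in> v_closure D F {z}" using v_closure_zero[OF qf] by simp
    then show ?thesis unfolding mem_t_closure_iff[OF qf] using z by (intro exI[of _ "{z}"]) simp
  next
    case False
    then have "x \<in> v_closure D F {x}" using subset_v_closure[of "{x}" F D] x IF by blast
    then show ?thesis unfolding mem_t_closure_iff[OF qf] using x False by (intro exI[of _ "{x}"]) simp
  qed
qed

lemma ideal_t_closure:
  assumes qf: "quotient_field D F" and I: "ideal_of D I" "I \<noteq> {0}"
  shows "ideal_of D (t_closure D F I)"
  unfolding ideal_of_def
proof (intro conjI ballI)
  show "t_closure D F I \<subseteq> D" by (rule t_closure_subset_domain[OF qf I(1)])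
  show "0 \<in> t_closure D F I" using subset_t_closure[OF qf I] ideal_zero[OF I(1)] by blast
  fix x y assume "x \<in> t_closure D F I" "y \<in> t_closure D F I"
  then obtain S1 S2 where S: "finite S1" "S1 \<noteq> {}" "S1 \<subseteq> I - {0}" "x \<in> v_closure D F S1"
    "finite S2" "S2 \<subseteq> I - {0}" "y \<in> v_closure D F S2"
    unfolding mem_t_closure_iff[OF qf] by blast
  then have "x + y \<in> v_closure D F (S1 \<union> S2)"
    using v_closure_mono[of _ "S1 \<union> S2" D F] by (intro v_closure_add[OF qf]) blast+
  then show "x + y \<in> t_closure D F I"
    unfolding mem_t_closure_iff[OF qf] using S by (intro exI[of _ "S1 \<union> S2"]) auto
next
  fix d x assume "d \<in> D" "x \<in> t_closure D F I"
  then show "d * x \<in> t_closure D F I"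
    unfolding mem_t_closure_iff[OF qf] using v_closure_mult[OF qf] by blast
qed

lemma t_closure_idem:
  assumes qf: "quotient_field D F" and IF: "I \<subseteq> F"
  shows "t_closure D F (t_closure D F I) \<subseteq> t_closure D F I"
proof
  fix x assume "x \<in> t_closure D F (t_closure D F I)"
  then obtain S where S: "finite S" "S \<noteq> {}" "S \<subseteq> t_closure D F I - {0}" "x \<in> v_closure D F S"
    unfolding mem_t_closure_iff[OF qf] by blast
  have "\<forall>s\<in>S. \<exists>U. finite U \<and> U \<noteq> {} \<and> U \<subseteq> I - {0} \<and> s \<in> v_closure D F U"
  proof
    fix s assume "s \<in> S"
    then have "s \<in> t_closure D F I" using S(3) by blast
    then show "\<exists>U. finite U \<and> U \<noteq> {} \<and> U \<subseteq> I - {0} \<and> s \<in> v_closure D F U"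
      unfolding mem_t_closure_iff[OF qf] .
  qed
  from bchoice[OF this] obtain f
    where f: "\<forall>s\<in>S. finite (f s) \<and> f s \<noteq> {} \<and> f s \<subseteq> I - {0} \<and> s \<in> v_closure D F (f s)"
    by blast
  define U where "U = \<Union>(f ` S)"
  have U: "finite U" "U \<noteq> {}" "U \<subseteq> I - {0}"
    using f S unfolding U_def by auto
  have "S \<subseteq> v_closure D F U"
    using f v_closure_mono[of _ U D F] unfolding U_def by (meson UN_upper subsetI subsetD)
  then have "v_closure D F S \<subseteq> v_closure D F (v_closure D F U)" by (rule v_closure_mono)
  also have "\<dots> = v_closure D F U" using U(3) IF by (intro v_closure_idem) blast
  finally have "x \<in> v_closure D F U" using S(4) by blast
  then show "x \<in> t_closure D F I"
    unfolding mem_t_closure_iff[OF qf] using U by blast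
qed

lemma t_ideal_t_closure:
  assumes qf: "quotient_field D F" and I: "ideal_of D I" "I \<noteq> {0}"
  shows "t_ideal D F (t_closure D F I)"
proof -
  let ?T = "t_closure D F I"
  have T: "ideal_of D ?T" by (rule ideal_t_closure[OF qf I])
  have "?T \<noteq> {0}" using subset_t_closure[OF qf I] I ideal_zero by blast
  moreover have "t_closure D F ?T = ?T"
    using t_closure_idem[OF qf ideal_subset_field[OF qf I(1)]] subset_t_closure[OF qf T calculation]
    by blast
  moreover have "frac_ideal D F ?T"
    using T ideal_subset_field[OF qf T] subring_one[OF quotient_field_subring[OF qf]]
    unfolding frac_ideal_def ideal_of_def by (intro conjI bexI[of _ 1]) auto
  ultimately show ?thesis unfolding t_ideal_def by blast
qed

lemma t_closure_t_ideal: "t_ideal D F I \<Longrightarrow> I \<noteq> {0} \<Longrightarrow> t_closure D F I = I"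
  unfolding t_ideal_def by auto

lemma ideal_Union_chain:
  assumes "Ch \<noteq> {}" "subset.chain {J. ideal_of D J} Ch" shows "ideal_of D (\<Union>Ch)"
proof -
  have idl: "ideal_of D X" if "X \<in> Ch" for X
    using assms(2) that unfolding subset_chain_def by blast
  have total: "X \<subseteq> Y \<or> Y \<subseteq> X" if "X \<in> Ch" "Y \<in> Ch" for X Y
    using assms(2) that unfolding subset_chain_def by blast
  show ?thesis unfolding ideal_of_def
  proof (intro conjI ballI)
    show "\<Union>Ch \<subseteq> D" using idl ideal_subset by blast
    show "0 \<in> \<Union>Ch" using assms(1) idl ideal_zero by blast
    fix x y assume "x \<in> \<Union>Ch" "y \<in> \<Union>Ch"
    then obtain X Y where XY: "X \<in> Ch" "Y \<in> Ch" "x \<in> X" "y \<in> Y" by blast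
    from total[OF XY(1,2)] show "x + y \<in> \<Union>Ch"
    proof
      assume "X \<subseteq> Y"
      then have "x + y \<in> Y" using XY ideal_add[OF idl[OF XY(2)]] by blast
      then show ?thesis using XY(2) by blast
    next
      assume "Y \<subseteq> X"
      then have "x + y \<in> X" using XY ideal_add[OF idl[OF XY(1)]] by blast
      then show ?thesis using XY(1) by blast
    qed
  next
    fix d x assume d: "d \<in> D" and "x \<in> \<Union>Ch"
    then obtain X where X: "X \<in> Ch" "x \<in> X" by blast
    then have "d * x \<in> X" using ideal_mult[OF idl[OF X(1)] d] by blast
    then show "d * x \<in> \<Union>Ch" using X(1) by blast
  qed
qed

lemma t_closure_Union_chain:
  assumes qf: "quotient_field D F" and ch: "Ch \<noteq> {}" "subset.chain C Ch"
    and x: "x \<in> t_closure D F (\<Union>Ch)"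
  shows "\<exists>X\<in>Ch. x \<in> t_closure D F X"
proof -
  obtain S where S: "finite S" "S \<noteq> {}" "S \<subseteq> \<Union>Ch - {0}" "x \<in> v_closure D F S"
    using x unfolding mem_t_closure_iff[OF qf] by blast
  then have "S \<subseteq> \<Union>Ch" by blast
  then obtain X where X: "X \<in> Ch" "S \<subseteq> X"
    using finite_subset_Union_chain[OF S(1) _ ch] by blast
  then have "S \<subseteq> X - {0}" using S(3) by blast
  then have "x \<in> t_closure D F X" unfolding mem_t_closure_iff[OF qf] using S(1,2,4) by blast
  then show ?thesis using X(1) by blast
qed

lemma exists_t_maximal_above:
  assumes qf: "quotient_field D F" and I: "ideal_of D I" "I \<noteq> {0}" "1 \<notin> t_closure D F I"
  shows "\<exists>M. t_maximal D F M \<and> I \<subseteq> M"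
proof -
  define C where "C = {J. ideal_of D J \<and> I \<subseteq> J \<and> 1 \<notin> t_closure D F J}"
  have "\<Union>Ch \<in> C" if Ch: "Ch \<noteq> {}" "subset.chain C Ch" for Ch
  proof -
    have "subset.chain {J. ideal_of D J} Ch" using Ch(2) unfolding C_def subset_chain_def by blast
    then have "ideal_of D (\<Union>Ch)" by (rule ideal_Union_chain[OF Ch(1)])
    moreover have "1 \<notin> t_closure D F (\<Union>Ch)"
      using t_closure_Union_chain[OF qf Ch] Ch(2) unfolding C_def subset_chain_def by blast
    ultimately show ?thesis using Ch unfolding C_def subset_chain_def by blast
  qed
  moreover have "I \<in> C" using I unfolding C_def by blast
  ultimately obtain M where M: "M \<in> C" "\<And>X. X \<in> C \<Longrightarrow> M \<subseteq> X \<Longrightarrow> X = M"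
    using subset_Zorn_nonempty[of C] by blast
  have Mi: "ideal_of D M" "I \<subseteq> M" "1 \<notin> t_closure D F M" using M(1) unfolding C_def by auto
  have Mne: "M \<noteq> {0}" using Mi(2) I(2) I(1) ideal_zero by blast
  have MT: "M \<subseteq> t_closure D F M" by (rule subset_t_closure[OF qf Mi(1) Mne])
  have "t_closure D F M \<in> C"
    using t_closure_idem[OF qf ideal_subset_field[OF qf Mi(1)]] ideal_t_closure[OF qf Mi(1) Mne] MT Mi
    unfolding C_def by blast
  then have TM: "t_closure D F M = M" using M(2) MT by blast
  have "J = M" if "ideal_of D J" "J \<noteq> D" "t_ideal D F J" "M \<subseteq> J" for J
  proof -
    have "J \<noteq> {0}" using that(4) Mne Mi(1) ideal_zero by blast
    then have "1 \<notin> t_closure D F J"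
      using t_closure_t_ideal[OF that(3)] ideal_eq_if_one[OF that(1)] that(2) by auto
    then show ?thesis using M(2) that(1,4) Mi(2) unfolding C_def by blast
  qed
  moreover have "M \<noteq> D" using Mi(3) MT subring_one[OF quotient_field_subring[OF qf]] by blast
  moreover have "t_ideal D F M" using t_ideal_t_closure[OF qf Mi(1) Mne] TM by simp
  ultimately show ?thesis unfolding t_maximal_def using Mi(1,2) by blast
qed

lemma ideal_plus_multiples:
  assumes R: "subring D" and M: "ideal_of D M" and a: "a \<in> D"
  shows "ideal_of D {m + a * d | m d. m \<in> M \<and> d \<in> D}"
  unfolding ideal_of_def
proof (intro conjI ballI subsetI)
  show "0 \<in> {m + a * d | m d. m \<in> M \<and> d \<in> D}"
    using ideal_zero[OF M] subring_zero[OF R] by force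
next
  fix z assume "z \<in> {m + a * d | m d. m \<in> M \<and> d \<in> D}"
  then obtain m d where "z = m + a * d" "m \<in> M" "d \<in> D" by blast
  then show "z \<in> D" using ideal_subset[OF M] a subring_add[OF R] subring_mult[OF R] by blast
next
  fix x y assume "x \<in> {m + a * d | m d. m \<in> M \<and> d \<in> D}" "y \<in> {m + a * d | m d. m \<in> M \<and> d \<in> D}"
  then obtain m d m' d' where "x = m + a * d" "y = m' + a * d'" "m \<in> M" "d \<in> D" "m' \<in> M" "d' \<in> D"
    by blast
  then show "x + y \<in> {m + a * d | m d. m \<in> M \<and> d \<in> D}"
    using ideal_add[OF M] subring_add[OF R]
    by (intro CollectI exI[of _ "m + m'"] exI[of _ "d + d'"]) (auto simp: algebra_simps)
next
  fix e x assume "e \<in> D" "x \<in> {m + a * d | m d. m \<in> M \<and> d \<in> D}"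
  then obtain m d where "x = m + a * d" "m \<in> M" "d \<in> D" by blast
  then show "e * x \<in> {m + a * d | m d. m \<in> M \<and> d \<in> D}"
    using ideal_mult[OF M] subring_mult[OF R] \<open>e \<in> D\<close>
    by (intro CollectI exI[of _ "e * m"] exI[of _ "e * d"]) (auto simp: algebra_simps)
qed

lemma one_in_t_closure_plus_multiples:
  assumes qf: "quotient_field D F" and M: "t_maximal D F M" "M \<noteq> {0}"
    and a: "a \<in> D" "a \<notin> M"
  shows "1 \<in> t_closure D F {m + a * d | m d. m \<in> M \<and> d \<in> D}"
proof (rule ccontr)
  let ?I = "{m + a * d | m d. m \<in> M \<and> d \<in> D}"
  let ?T = "t_closure D F ?I"
  have R: "subring D" by (rule quotient_field_subring[OF qf])
  have Mi: "ideal_of D M"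
    and Mmax: "\<And>J. ideal_of D J \<Longrightarrow> J \<noteq> D \<Longrightarrow> t_ideal D F J \<Longrightarrow> M \<subseteq> J \<Longrightarrow> J = M"
    using M(1) unfolding t_maximal_def by auto
  have I: "ideal_of D ?I" by (rule ideal_plus_multiples[OF R Mi a(1)])
  have MI: "M \<subseteq> ?I"
  proof
    fix m assume "m \<in> M"
    then show "m \<in> ?I" using subring_zero[OF R] by (intro CollectI exI[of _ m] exI[of _ 0]) auto
  qed
  have aI: "a \<in> ?I"
    using ideal_zero[OF Mi] subring_one[OF R] by (intro CollectI exI[of _ 0] exI[of _ 1]) auto
  have Ine: "?I \<noteq> {0}" using MI M(2) ideal_zero[OF Mi] by blast
  assume "1 \<notin> ?T"
  then have "?T = M"
    using subring_one[OF R] MI subset_t_closure[OF qf I Ine]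
    by (intro Mmax ideal_t_closure[OF qf I Ine] t_ideal_t_closure[OF qf I Ine]) auto
  then show False using aI subset_t_closure[OF qf I Ine] a(2) by blast
qed

lemma one_in_v_closure_times:
  assumes qf: "quotient_field D F" and SyD: "Sy \<subseteq> D"
    and Sx: "1 \<in> v_closure D F Sx" and Sy: "1 \<in> v_closure D F Sy"
  shows "1 \<in> v_closure D F ((\<lambda>(s, t). s * t) ` (Sx \<times> Sy))"
  unfolding one_in_v_closure_iff
proof (intro conjI ballI impI)
  show "1 \<in> F" using Sx unfolding one_in_v_closure_iff by blast
  fix z assume z: "z \<in> F" "\<forall>p\<in>(\<lambda>(s, t). s * t) ` (Sx \<times> Sy). z * p \<in> D"
  have "z * t \<in> D" if "t \<in> Sy" for t
  proof -
    have "z * t \<in> F" using z(1) that SyD quotient_field_subset[OF qf] quotient_field_mult[OF qf] by blast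
    moreover have "\<forall>s\<in>Sx. (z * t) * s \<in> D"
      using z(2) that by (auto simp: ac_simps)
    ultimately show ?thesis using Sx unfolding one_in_v_closure_iff by blast
  qed
  then show "z \<in> D" using Sy z(1) unfolding one_in_v_closure_iff by blast
qed

lemma mult_plus_multiples_mem:
  assumes R: "subring D" and M: "ideal_of D M" and xy: "x \<in> D" "y \<in> D" "x * y \<in> M"
    and s: "s \<in> {m + x * d | m d. m \<in> M \<and> d \<in> D}" and t: "t \<in> {m + y * d | m d. m \<in> M \<and> d \<in> D}"
  shows "s * t \<in> M"
proof -
  obtain m d m' d' where md: "s = m + x * d" "t = m' + y * d'" "m \<in> M" "d \<in> D" "m' \<in> M" "d' \<in> D"
    using s t by blast
  have "t \<in> D" using md ideal_subset[OF M] xy(2) subring_add[OF R] subring_mult[OF R] by blast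
  then have "t * m \<in> M" "(x * d) * m' \<in> M" "(d * d') * (x * y) \<in> M"
    using md xy ideal_mult[OF M] subring_mult[OF R] by blast+
  moreover have "s * t = t * m + (x * d) * m' + (d * d') * (x * y)"
    using md(1,2) by (simp add: algebra_simps)
  ultimately show ?thesis using ideal_add[OF M] by metis
qed

text \<open>If x, y lie outside M, then M + xD and M + yD have t-closure D, witnessed by finite
  sets whose products lie in M and again have v-closure D.\<close>
lemma t_maximal_prime:
  assumes qf: "quotient_field D F" and M: "t_maximal D F M"
  shows "prime_ideal_of D M"
proof -
  have R: "subring D" by (rule quotient_field_subring[OF qf])
  have Mi: "ideal_of D M" "M \<noteq> D" "t_ideal D F M" using M unfolding t_maximal_def by auto
  have "x \<in> M \<or> y \<in> M" if xy: "x \<in> D" "y \<in> D" "x * y \<in> M" for x y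
  proof (rule ccontr)
    assume "\<not> (x \<in> M \<or> y \<in> M)"
    then have nx: "x \<notin> M" and ny: "y \<notin> M" by auto
    then have Mne: "M \<noteq> {0}" using xy by auto
    obtain Sx where Sx: "finite Sx" "Sx \<noteq> {}" "Sx \<subseteq> {m + x * d | m d. m \<in> M \<and> d \<in> D} - {0}"
        "1 \<in> v_closure D F Sx"
      using one_in_t_closure_plus_multiples[OF qf M Mne xy(1) nx] unfolding mem_t_closure_iff[OF qf]
      by blast
    obtain Sy where Sy: "finite Sy" "Sy \<noteq> {}" "Sy \<subseteq> {m + y * d | m d. m \<in> M \<and> d \<in> D} - {0}"
        "1 \<in> v_closure D F Sy"
      using one_in_t_closure_plus_multiples[OF qf M Mne xy(2) ny] unfolding mem_t_closure_iff[OF qf]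
      by blast
    define P where "P = (\<lambda>(s, t). s * t) ` (Sx \<times> Sy)"
    have SyD: "Sy \<subseteq> D"
      using Sy(3) ideal_subset[OF ideal_plus_multiples[OF R Mi(1) xy(2)]] by blast
    have "p \<in> M - {0}" if "p \<in> P" for p
    proof -
      obtain s t where st: "p = s * t" "s \<in> Sx" "t \<in> Sy" using \<open>p \<in> P\<close> unfolding P_def by auto
      then have "s \<in> {m + x * d | m d. m \<in> M \<and> d \<in> D}" "t \<in> {m + y * d | m d. m \<in> M \<and> d \<in> D}"
        using Sx(3) Sy(3) by blast+
      then have "p \<in> M" using mult_plus_multiples_mem[OF R Mi(1) xy] st(1) by blast
      moreover have "p \<noteq> 0" using st Sx(3) Sy(3) by auto
      ultimately show ?thesis by blast
    qed
    moreover have "finite P" "P \<noteq> {}" using Sx Sy unfolding P_def by auto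
    moreover have "1 \<in> v_closure D F P"
      unfolding P_def by (rule one_in_v_closure_times[OF qf SyD Sx(4) Sy(4)])
    ultimately have "1 \<in> t_closure D F M" unfolding mem_t_closure_iff[OF qf] by blast
    then show False using t_closure_t_ideal[OF Mi(3) Mne] ideal_eq_if_one[OF Mi(1)] Mi(2) by simp
  qed
  then show ?thesis unfolding prime_ideal_of_def using Mi by blast
qed

lemma monic_poly_of_relation:
  assumes R: "subring D" and f: "\<forall>i<n. f i \<in> D" and rel: "z ^ n + (\<Sum>i<n. f i * z ^ i) = 0"
  shows "\<exists>p. lead_coeff p = 1 \<and> (\<forall>i. coeff p i \<in> D) \<and> poly p z = 0"
proof -
  define p where "p = monom 1 n + (\<Sum>i<n. monom (f i) i)"
  have coeff_p: "coeff p j = (if j = n then 1 else if j < n then f j else 0)" for j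
    unfolding p_def by (auto simp: coeff_sum sum.delta)
  have "degree p = n"
    by (rule antisym, rule degree_le) (auto simp: coeff_p intro: le_degree)
  then have "lead_coeff p = 1" by (simp add: coeff_p)
  moreover have "\<forall>i. coeff p i \<in> D" using coeff_p f subring_zero[OF R] subring_one[OF R] by simp
  moreover have "poly p z = 0" unfolding p_def using rel by (simp add: poly_sum poly_monom)
  ultimately show ?thesis by blast
qed

lemma valuation_domain_min_coeff:
  assumes W: "valuation_domain W K" and K: "subfield K" and fK: "\<forall>i. f i \<in> K"
  shows "(\<exists>i\<le>(n::nat). f i \<noteq> 0) \<Longrightarrow> \<exists>k\<le>n. f k \<noteq> 0 \<and> (\<forall>i\<le>n. f i / f k \<in> W)"
proof (induction n)
  case 0
  have "1 \<in> W" using W unfolding valuation_domain_def subring_def by auto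
  then show ?case using 0 by auto
next
  case (Suc n)
  have R: "subring W" and dich: "\<forall>x\<in>K. x \<noteq> 0 \<longrightarrow> x \<in> W \<or> inverse x \<in> W"
    using W unfolding valuation_domain_def by auto
  have top: "\<exists>k\<le>Suc n. f k \<noteq> 0 \<and> (\<forall>i\<le>Suc n. f i / f k \<in> W)"
    if fs: "f (Suc n) \<noteq> 0" and below: "\<forall>i\<le>n. f i / f (Suc n) \<in> W"
  proof -
    have "f i / f (Suc n) \<in> W" if "i \<le> Suc n" for i
      using that below fs subring_one[OF R] by (cases "i = Suc n") auto
    then show ?thesis using fs by (intro exI[of _ "Suc n"]) auto
  qed
  show ?case
  proof (cases "\<exists>i\<le>n. f i \<noteq> 0")
    case False
    then have "f (Suc n) \<noteq> 0" using Suc.prems le_Suc_eq by blast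
    moreover have "\<forall>i\<le>n. f i / f (Suc n) \<in> W" using False subring_zero[OF R] by simp
    ultimately show ?thesis by (rule top)
  next
    case True
    then obtain k where k: "k \<le> n" "f k \<noteq> 0" "\<forall>i\<le>n. f i / f k \<in> W" using Suc.IH by blast
    show ?thesis
    proof (cases "f (Suc n) / f k \<in> W")
      case True
      then show ?thesis using k le_Suc_eq by (intro exI[of _ k]) auto
    next
      case False
      then have "f (Suc n) / f k \<noteq> 0" using subring_zero[OF R] by auto
      moreover have "f (Suc n) / f k \<in> K" using fK subfield_divide[OF K] by blast
      ultimately have inv: "f k / f (Suc n) \<in> W" using dich False by auto
      have "f i / f (Suc n) \<in> W" if "i \<le> n" for i
      proof -
        have "f i / f (Suc n) = (f i / f k) * (f k / f (Suc n))" using k(2) by simp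
        moreover have "(f i / f k) * (f k / f (Suc n)) \<in> W"
          using subring_mult[OF R k(3)[rule_format, OF that] inv] .
        ultimately show ?thesis by (simp only:)
      qed
      moreover have "f (Suc n) \<noteq> 0" using \<open>f (Suc n) / f k \<noteq> 0\<close> by auto
      ultimately show ?thesis using top by blast
    qed
  qed
qed

lemma clear_denominators:
  assumes qf: "quotient_field A K"
  shows "(\<forall>i. coeff p i \<in> K) \<Longrightarrow> \<exists>d\<in>A. d \<noteq> 0 \<and> (\<forall>i. d * coeff p i \<in> A)"
proof (induction p)
  case 0
  then show ?case using subring_zero[OF quotient_field_subring[OF qf]]
      subring_one[OF quotient_field_subring[OF qf]] by (intro bexI[of _ 1]) auto
next
  case (pCons a p)
  have R: "subring A" by (rule quotient_field_subring[OF qf])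
  have "\<forall>i. coeff p i \<in> K" "a \<in> K" using pCons.prems by (metis coeff_pCons_Suc, metis coeff_pCons_0)
  then obtain d e f where d: "d \<in> A" "d \<noteq> 0" "\<forall>i. d * coeff p i \<in> A"
    and ef: "e \<in> A" "f \<in> A" "f \<noteq> 0" "a = e / f"
    using pCons.IH quotient_field_fraction[OF qf] by metis
  have "d * f * coeff (pCons a p) i \<in> A" for i
  proof (cases i)
    case 0
    then have "d * f * coeff (pCons a p) i = d * e" using ef by simp
    moreover have "d * e \<in> A" using subring_mult[OF R d(1) ef(1)] .
    ultimately show ?thesis by (simp only:)
  next
    case (Suc j)
    then have "d * f * coeff (pCons a p) i = f * (d * coeff p j)" by (simp add: ac_simps)
    moreover have "f * (d * coeff p j) \<in> A" using subring_mult[OF R ef(2)] d(3) by blast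
    ultimately show ?thesis by (simp only:)
  qed
  then show ?case using d ef subring_mult[OF R] by (intro bexI[of _ "d * f"]) auto
qed

text \<open>The lowest nonzero coefficient of a polynomial over A vanishing at x is a multiple of x.\<close>
lemma nonzero_multiple_in_subring:
  assumes A: "subring A" and B: "subring B" and AB: "A \<subseteq> B" and x: "x \<in> B" "x \<noteq> 0"
  shows "p \<noteq> 0 \<Longrightarrow> (\<forall>i. coeff p i \<in> A) \<Longrightarrow> poly p x = 0 \<Longrightarrow> \<exists>a\<in>A. a \<noteq> 0 \<and> (\<exists>b\<in>B. a = x * b)"
proof (induction p)
  case (pCons a p)
  have "\<forall>i. coeff p i \<in> A" "a \<in> A" using pCons.prems by (metis coeff_pCons_Suc, metis coeff_pCons_0)
  show ?case
  proof (cases "a = 0")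
    case True
    then show ?thesis using pCons \<open>\<forall>i. coeff p i \<in> A\<close> x by auto
  next
    case False
    have "- poly p x \<in> B" using subring_poly[OF B x(1)] \<open>\<forall>i. coeff p i \<in> A\<close> AB subring_uminus[OF B] by blast
    moreover have "a = x * (- poly p x)" using pCons.prems(3) by (simp add: algebra_simps eq_neg_iff_add_eq_0)
    ultimately show ?thesis using \<open>a \<in> A\<close> False by blast
  qed
qed simp

locale prime_localization =
  fixes B L M :: "'a::field set"
  assumes quotient_field: "quotient_field B L" and prime: "prime_ideal_of B M"
begin

abbreviation "BM \<equiv> localization B M"

definition local_unit :: "'a \<Rightarrow> bool" where
  "local_unit x \<longleftrightarrow> x \<in> BM \<and> x \<noteq> 0 \<and> inverse x \<in> BM"

lemma subring_B: "subring B"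
  by (rule quotient_field_subring[OF quotient_field])

lemma ideal_M: "ideal_of B M"
  using prime unfolding prime_ideal_of_def by blast

lemma mult_notin_M: "s \<in> B \<Longrightarrow> t \<in> B \<Longrightarrow> s \<notin> M \<Longrightarrow> t \<notin> M \<Longrightarrow> s * t \<notin> M"
  using prime unfolding prime_ideal_of_def by blast

lemma one_notin_M: "1 \<notin> M"
  using prime ideal_eq_if_one[OF ideal_M] unfolding prime_ideal_of_def by blast

lemma nonzero_if_notin_M: "s \<notin> M \<Longrightarrow> s \<noteq> 0"
  using ideal_zero[OF ideal_M] by auto

lemma mem_BM_iff: "x \<in> BM \<longleftrightarrow> (\<exists>a s. a \<in> B \<and> s \<in> B \<and> s \<notin> M \<and> x = a / s)"
  unfolding localization_def by blast

lemma fraction_in_BM: "a \<in> B \<Longrightarrow> s \<in> B \<Longrightarrow> s \<notin> M \<Longrightarrow> a / s \<in> BM"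
  unfolding mem_BM_iff by blast

lemma subring_BM: "subring BM"
  unfolding subring_def
proof (intro conjI ballI)
  show "0 \<in> BM" "1 \<in> BM"
    using fraction_in_BM[OF _ subring_one[OF subring_B] one_notin_M]
      subring_zero[OF subring_B] subring_one[OF subring_B] by simp_all
  fix x y assume "x \<in> BM" "y \<in> BM"
  then obtain a s b t where ab: "a \<in> B" "s \<in> B" "s \<notin> M" "x = a / s" "b \<in> B" "t \<in> B" "t \<notin> M" "y = b / t"
    unfolding mem_BM_iff by blast
  have st: "s * t \<in> B" "s * t \<notin> M" using ab subring_mult[OF subring_B] mult_notin_M by auto
  have "s \<noteq> 0" "t \<noteq> 0" using ab nonzero_if_notin_M by auto
  then have "x + y = (a * t + b * s) / (s * t)" "x - y = (a * t - b * s) / (s * t)"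
    "x * y = (a * b) / (s * t)" using ab by (simp_all add: field_simps)
  moreover have "a * t + b * s \<in> B" "a * t - b * s \<in> B" "a * b \<in> B"
    using ab subring_add[OF subring_B] subring_diff[OF subring_B] subring_mult[OF subring_B] by simp_all
  ultimately show "x + y \<in> BM" "x - y \<in> BM" "x * y \<in> BM"
    using fraction_in_BM[OF _ st] by simp_all
qed

lemma BM_subset: "BM \<subseteq> L"
proof
  fix x assume "x \<in> BM"
  then obtain a s where "a \<in> B" "s \<in> B" "x = a / s" unfolding mem_BM_iff by blast
  then show "x \<in> L"
    using quotient_field_subset[OF quotient_field] subfield_divide[OF quotient_field_subfield[OF quotient_field]]
    by blast
qed

lemma local_unit_fraction_iff:
  assumes "a \<in> B" "s \<in> B" "s \<notin> M" shows "local_unit (a / s) \<longleftrightarrow> a \<notin> M"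
proof
  assume "a \<notin> M"
  then show "local_unit (a / s)"
    unfolding local_unit_def mem_BM_iff using assms nonzero_if_notin_M by auto
next
  assume "local_unit (a / s)"
  then obtain b t where bt: "b \<in> B" "t \<in> B" "t \<notin> M" "s / a = b / t" "a \<noteq> 0"
    unfolding local_unit_def mem_BM_iff by auto
  then have "s * t = b * a" using nonzero_if_notin_M[OF assms(3)] nonzero_if_notin_M[OF bt(3)]
    by (simp add: field_simps)
  then show "a \<notin> M" using ideal_mult[OF ideal_M bt(1)] mult_notin_M assms bt by metis
qed

lemma local_nonunit_add:
  assumes "x \<in> BM" "\<not> local_unit x" "y \<in> BM" "\<not> local_unit y" shows "\<not> local_unit (x + y)"
proof -
  obtain a s b t where ab: "a \<in> B" "s \<in> B" "s \<notin> M" "x = a / s" "b \<in> B" "t \<in> B" "t \<notin> M" "y = b / t"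
    using assms unfolding mem_BM_iff by blast
  have "a \<in> M" "b \<in> M" using local_unit_fraction_iff ab assms by blast+
  then have "t * a + s * b \<in> M" using ideal_add[OF ideal_M] ideal_mult[OF ideal_M] ab by blast
  moreover have "s * t \<in> B" "s * t \<notin> M" using ab subring_mult[OF subring_B] mult_notin_M by auto
  moreover have "x + y = (t * a + s * b) / (s * t)"
    using ab nonzero_if_notin_M by (simp add: field_simps)
  ultimately show ?thesis using local_unit_fraction_iff ideal_subset[OF ideal_M] by auto
qed

lemma local_unit_if_add_nonunit:
  assumes "local_unit x" "y \<in> BM" "\<not> local_unit (x + y)" shows "local_unit y"
proof (rule ccontr)
  assume "\<not> local_unit y"
  then have "\<not> local_unit (- y)"
    unfolding local_unit_def using subring_uminus[OF subring_BM] by (fastforce simp: inverse_minus_eq)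
  moreover have "x + y \<in> BM" "- y \<in> BM"
    using assms subring_add[OF subring_BM] subring_uminus[OF subring_BM] unfolding local_unit_def by blast+
  ultimately have "\<not> local_unit ((x + y) + (- y))" using local_nonunit_add assms(3) by blast
  then show False using assms(1) by simp
qed

lemma common_denominator:
  "(\<forall>i<(n::nat). e i \<in> BM) \<Longrightarrow> \<exists>s. s \<in> B \<and> s \<notin> M \<and> (\<forall>i<n. s * e i \<in> B)"
proof (induction n)
  case 0 then show ?case using subring_one[OF subring_B] one_notin_M by auto
next
  case (Suc n)
  then obtain s where s: "s \<in> B" "s \<notin> M" "\<forall>i<n. s * e i \<in> B" by auto
  obtain a t where at: "a \<in> B" "t \<in> B" "t \<notin> M" "e n = a / t" using Suc.prems unfolding mem_BM_iff by blast
  have "s * t * e i \<in> B" if "i < Suc n" for i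
  proof (cases "i = n")
    case True
    then have "s * t * e i = s * a" using at(4) nonzero_if_notin_M[OF at(3)] by simp
    moreover have "s * a \<in> B" using subring_mult[OF subring_B s(1) at(1)] .
    ultimately show ?thesis by (simp only:)
  next
    case False
    then have "s * e i \<in> B" using that s(3) by simp
    then have "t * (s * e i) \<in> B" using subring_mult[OF subring_B at(2)] by blast
    then show ?thesis by (simp add: ac_simps)
  qed
  then show ?case using s at subring_mult[OF subring_B] mult_notin_M by (intro exI[of _ "s * t"]) auto
qed

text \<open>Clearing the denominators of the coefficients by s turns a monic relation for w over
  B_M into one for s w over B.\<close>
lemma root_of_monic_in_BM:
  assumes ic: "integrally_closed B L" and e: "\<forall>i<n. e i \<in> BM" and w: "w \<in> L"
    and rel: "w ^ n + (\<Sum>i<n. e i * w ^ i) = 0"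
  shows "w \<in> BM"
proof -
  obtain s where s: "s \<in> B" "s \<notin> M" "\<forall>i<n. s * e i \<in> B" using common_denominator[OF e] by blast
  define f where "f i = s ^ (n - i) * e i" for i
  have f: "\<forall>i<n. f i \<in> B"
  proof (intro allI impI)
    fix i assume "i < n"
    then have "f i = s ^ (n - i - 1) * (s * e i)"
      unfolding f_def by (metis Suc_diff_Suc diff_Suc_1 mult.assoc power_Suc2)
    then show "f i \<in> B" using subring_mult[OF subring_B] subring_power[OF subring_B] s \<open>i < n\<close> by simp
  qed
  have "f i * (s * w) ^ i = s ^ n * (e i * w ^ i)" if "i < n" for i
    using that unfolding f_def by (simp add: power_mult_distrib power_add[symmetric])
  then have "(\<Sum>i<n. f i * (s * w) ^ i) = s ^ n * (\<Sum>i<n. e i * w ^ i)"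
    unfolding sum_distrib_left by (intro sum.cong) auto
  then have "(s * w) ^ n + (\<Sum>i<n. f i * (s * w) ^ i) = s ^ n * (w ^ n + (\<Sum>i<n. e i * w ^ i))"
    by (simp add: distrib_left power_mult_distrib)
  then have "(s * w) ^ n + (\<Sum>i<n. f i * (s * w) ^ i) = 0" using rel by simp
  then obtain p where p: "lead_coeff p = 1" "\<forall>i. coeff p i \<in> B" "poly p (s * w) = 0"
    using monic_poly_of_relation[OF subring_B f] by blast
  have "s \<in> L" using s(1) quotient_field_subset[OF quotient_field] by blast
  then have "s * w \<in> L" using quotient_field_mult[OF quotient_field _ w] by blast
  then have "s * w \<in> B" using ic p unfolding integrally_closed_def by blast
  moreover have "w = (s * w) / s" using nonzero_if_notin_M[OF s(2)] by simp
  ultimately show ?thesis using fraction_in_BM[OF _ s(1,2)] by metis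
qed

text \<open>Multiplying the relation by c^m, c the leading coefficient, makes it monic in c u.\<close>
lemma leading_coeff_mult_root_in_BM:
  assumes ic: "integrally_closed B L" and u: "u \<in> L" and c: "\<forall>i\<le>Suc m. c i \<in> BM"
    and root: "(\<Sum>i\<le>Suc m. c i * u ^ i) = 0"
  shows "c (Suc m) * u \<in> BM"
proof -
  define cn where "cn = c (Suc m)"
  define w where "w = cn * u"
  have cn: "cn \<in> BM" unfolding cn_def using c by simp
  have "c i * cn ^ (m - i) * w ^ i = cn ^ m * (c i * u ^ i)" if "i < Suc m" for i
  proof -
    have "cn ^ (m - i) * cn ^ i = cn ^ m" using that by (simp add: power_add[symmetric])
    then show ?thesis unfolding w_def by (simp add: power_mult_distrib ac_simps)
  qed
  then have "(\<Sum>i<Suc m. c i * cn ^ (m - i) * w ^ i) = cn ^ m * (\<Sum>i<Suc m. c i * u ^ i)"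
    unfolding sum_distrib_left by (intro sum.cong) auto
  moreover have "w ^ Suc m = cn ^ m * (cn * u ^ Suc m)"
    unfolding w_def by (simp add: power_mult_distrib ac_simps)
  moreover have "(\<Sum>i\<le>Suc m. c i * u ^ i) = (\<Sum>i<Suc m. c i * u ^ i) + cn * u ^ Suc m"
    unfolding cn_def by (simp add: lessThan_Suc_atMost[symmetric])
  ultimately have "w ^ Suc m + (\<Sum>i<Suc m. c i * cn ^ (m - i) * w ^ i) = cn ^ m * (\<Sum>i\<le>Suc m. c i * u ^ i)"
    by (simp add: distrib_left)
  then have rel: "w ^ Suc m + (\<Sum>i<Suc m. c i * cn ^ (m - i) * w ^ i) = 0" using root by simp
  have "\<forall>i<Suc m. c i * cn ^ (m - i) \<in> BM"
    using c cn subring_mult[OF subring_BM] subring_power[OF subring_BM] by simp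
  moreover have "w \<in> L" unfolding w_def using cn u BM_subset quotient_field_mult[OF quotient_field] by blast
  ultimately have "w \<in> BM"
    using root_of_monic_in_BM[OF ic, of "Suc m" "\<lambda>i. c i * cn ^ (m - i)" w] rel by blast
  then show ?thesis unfolding w_def cn_def .
qed

text \<open>If the leading coefficient c is not a unit, the root u is
  replaced by c u, which lies in B_M, and the top two terms merge into one of lower degree;
  the unit coefficient survives unless it is the merged one, in which case c u is a unit.\<close>
lemma root_dichotomy:
  assumes ic: "integrally_closed B L" and u: "u \<in> L"
  shows "(\<forall>i\<le>n. c i \<in> BM) \<Longrightarrow> (\<exists>i\<le>n. local_unit (c i)) \<Longrightarrow> (\<Sum>i\<le>n. c i * u ^ i) = 0
    \<Longrightarrow> u \<in> BM \<or> inverse u \<in> BM"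
proof (induction n arbitrary: c)
  case 0
  then show ?case unfolding local_unit_def by auto
next
  case (Suc m)
  define cn where "cn = c (Suc m)"
  define w where "w = cn * u"
  have c: "c i \<in> BM" if "i \<le> Suc m" for i using Suc.prems(1) that by blast
  have cn: "cn \<in> BM" unfolding cn_def using c by simp
  have w: "w \<in> BM" unfolding w_def cn_def
    by (rule leading_coeff_mult_root_in_BM[OF ic u Suc.prems(1,3)])
  show ?case
  proof (cases "local_unit cn")
    case True
    then have "u = w * inverse cn" unfolding w_def local_unit_def by simp
    then show ?thesis using w True subring_mult[OF subring_BM] unfolding local_unit_def by simp
  next
    case cn_nonunit: False
    define c' where "c' = c(m := c m + w)"
    have c': "\<forall>i\<le>m. c' i \<in> BM" unfolding c'_def using c w subring_add[OF subring_BM] by simp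
    have "(\<Sum>i\<le>m. c' i * u ^ i) = (\<Sum>i<m. c i * u ^ i) + (c m * u ^ m + cn * u ^ Suc m)"
      unfolding c'_def w_def lessThan_Suc_atMost[symmetric] by (simp add: algebra_simps)
    also have "\<dots> = (\<Sum>i\<le>Suc m. c i * u ^ i)"
      unfolding cn_def lessThan_Suc_atMost[symmetric] by (simp add: algebra_simps)
    finally have c'_root: "(\<Sum>i\<le>m. c' i * u ^ i) = 0" using Suc.prems(3) by simp
    show ?thesis
    proof (cases "\<exists>i\<le>m. local_unit (c' i)")
      case True
      show ?thesis by (rule Suc.IH[OF c' True c'_root])
    next
      case False
      obtain i where i: "i \<le> Suc m" "local_unit (c i)" using Suc.prems(2) by blast
      have "i = m"
      proof (rule ccontr)
        assume "i \<noteq> m"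
        then have "i < m" using i cn_nonunit unfolding cn_def by (auto simp: le_Suc_eq)
        then have "c' i = c i" unfolding c'_def by simp
        then show False using False i(2) \<open>i < m\<close> by (metis less_imp_le)
      qed
      moreover have "\<not> local_unit (c m + w)" using False unfolding c'_def by auto
      ultimately have "local_unit w" using local_unit_if_add_nonunit[OF _ w] i(2) by blast
      then have "inverse u = cn * inverse w" unfolding w_def local_unit_def by (simp add: field_simps)
      then show ?thesis using cn \<open>local_unit w\<close> subring_mult[OF subring_BM] unfolding local_unit_def by simp
    qed
  qed
qed


text \<open>Dividing the coefficients by one of minimal value in W makes them lie in W \<subseteq> B_M,
  with 1 among them.\<close>
lemma algebraic_dichotomy:
  assumes ic: "integrally_closed B L" and K: "subfield K"
    and W: "valuation_domain W K" "W \<subseteq> BM"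
    and x: "x \<in> L" and p: "p \<noteq> 0" "\<forall>i. coeff p i \<in> K" "poly p x = 0"
  shows "x \<in> BM \<or> inverse x \<in> BM"
proof -
  have "\<exists>i\<le>degree p. coeff p i \<noteq> 0" using p(1) by (intro exI[of _ "degree p"]) simp
  then obtain k where k: "k \<le> degree p" "coeff p k \<noteq> 0" "\<forall>i\<le>degree p. coeff p i / coeff p k \<in> W"
    using valuation_domain_min_coeff[OF W(1) K p(2)] by blast
  define c where "c i = coeff p i / coeff p k" for i
  have "\<forall>i\<le>degree p. c i \<in> BM" using k(3) W(2) unfolding c_def by blast
  moreover have "local_unit (c k)"
    unfolding local_unit_def c_def using k(2) subring_one[OF subring_BM] by simp
  moreover have "(\<Sum>i\<le>degree p. c i * x ^ i) = poly p x / coeff p k"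
    unfolding c_def poly_altdef by (simp add: sum_divide_distrib)
  ultimately show ?thesis using root_dichotomy[OF ic x] k(1) p(3) by auto
qed

end

lemma contraction_nonzero:
  assumes alg: "algebraic_ext K L" and qfA: "quotient_field A K" and qfB: "quotient_field B L"
    and AB: "A \<subseteq> B" and M: "ideal_of B M" "M \<noteq> {0}"
  shows "M \<inter> A \<noteq> {0}"
proof -
  obtain x where x: "x \<in> M" "x \<noteq> 0" using M ideal_zero by blast
  have xB: "x \<in> B" using x ideal_subset[OF M(1)] by blast
  obtain p where p: "p \<noteq> 0" "\<forall>i. coeff p i \<in> K" "poly p x = 0"
    using alg xB quotient_field_subset[OF qfB] unfolding algebraic_ext_def by blast
  obtain d where d: "d \<in> A" "d \<noteq> 0" "\<forall>i. d * coeff p i \<in> A" using clear_denominators[OF qfA p(2)] by blast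
  have "smult d p \<noteq> 0" "\<forall>i. coeff (smult d p) i \<in> A" "poly (smult d p) x = 0" using p d by auto
  then obtain a b where ab: "a \<in> A" "a \<noteq> 0" "b \<in> B" "a = x * b"
    using nonzero_multiple_in_subring[OF quotient_field_subring[OF qfA] quotient_field_subring[OF qfB] AB xB x(2)]
    by blast
  then have "a \<in> M" using ideal_mult[OF M(1) ab(3) x(1)] by (simp add: mult.commute)
  then show ?thesis using ab by blast
qed

lemma ideal_contraction:
  assumes A: "subring A" and AB: "A \<subseteq> B" and M: "ideal_of B M" shows "ideal_of A (M \<inter> A)"
  unfolding ideal_of_def
proof (intro conjI ballI)
  show "M \<inter> A \<subseteq> A" "0 \<in> M \<inter> A" using ideal_zero[OF M] subring_zero[OF A] by auto
  fix x y assume "x \<in> M \<inter> A" "y \<in> M \<inter> A"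
  then show "x + y \<in> M \<inter> A" using ideal_add[OF M] subring_add[OF A] by blast
next
  fix d x assume "d \<in> A" "x \<in> M \<inter> A"
  then show "d * x \<in> M \<inter> A" using ideal_mult[OF M] subring_mult[OF A] AB by blast
qed

lemma localization_mono:
  "A \<subseteq> B \<Longrightarrow> M \<inter> A \<subseteq> Q \<Longrightarrow> localization A Q \<subseteq> localization B M"
  unfolding localization_def by blast

lemma essential_representation_valuation:
  "essential_representation B L \<V> \<Longrightarrow> V \<in> \<V> \<Longrightarrow> valuation_domain V L \<and> B \<subseteq> V"
  unfolding essential_representation_def essential_valuation_overring_def valuation_overring_def
  by blast

text \<open>If y S \<subseteq> B but y is not in some V, then S lies in the maximal ideal of V, hence in its
  center on A, which is a t-ideal; so 1 would lie in that center.\<close>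
lemma one_in_v_closure_lift:
  assumes qfA: "quotient_field A K" and L: "subfield L"
    and rep: "essential_representation B L \<V>"
    and centers: "\<forall>V\<in>\<V>. t_ideal A K (max_ideal_val V \<inter> A)"
    and S: "finite S" "S \<noteq> {}" "S \<subseteq> A - {0}" "1 \<in> v_closure A K S"
  shows "1 \<in> v_closure B L S"
  unfolding one_in_v_closure_iff
proof (intro conjI ballI impI)
  show "1 \<in> L" using subring_one[OF subfield_subring[OF L]] .
  fix y assume y: "y \<in> L" "\<forall>s\<in>S. y * s \<in> B"
  have "y \<in> V" if V: "V \<in> \<V>" for V
  proof (rule ccontr)
    assume yV: "y \<notin> V"
    have R: "subring V" and BV: "B \<subseteq> V" and dich: "\<forall>x\<in>L. x \<noteq> 0 \<longrightarrow> x \<in> V \<or> inverse x \<in> V"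
      using essential_representation_valuation[OF rep V] unfolding valuation_domain_def by auto
    have "y \<noteq> 0" using yV subring_zero[OF R] by auto
    then have iy: "inverse y \<in> V" using dich y(1) yV by blast
    define P where "P = max_ideal_val V \<inter> A"
    have "S \<subseteq> P - {0}"
    proof
      fix s assume s: "s \<in> S"
      then have "y * s \<in> V" "s \<noteq> 0" using y(2) BV S(3) by auto
      moreover have "s = (y * s) * inverse y" "y = (y * s) * inverse s" using \<open>y \<noteq> 0\<close> \<open>s \<noteq> 0\<close> by simp_all
      ultimately have "s \<in> V" "inverse s \<notin> V" using iy yV subring_mult[OF R] by metis+
      then show "s \<in> P - {0}" unfolding P_def max_ideal_val_def using s S(3) by blast
    qed
    then have "1 \<in> t_closure A K P"
      unfolding mem_t_closure_iff[OF qfA] using S by blast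
    moreover have "t_closure A K P = P"
      using centers V \<open>S \<subseteq> P - {0}\<close> S(2) unfolding P_def by (intro t_closure_t_ideal) auto
    ultimately show False using subring_one[OF R] unfolding P_def max_ideal_val_def by simp
  qed
  then show "y \<in> B" using rep y(1) unfolding essential_representation_def by blast
qed

lemma one_notin_t_closure_contraction:
  assumes qfA: "quotient_field A K" and qfB: "quotient_field B L"
    and rep: "essential_representation B L \<V>"
    and centers: "\<forall>V\<in>\<V>. t_ideal A K (max_ideal_val V \<inter> A)"
    and M: "t_maximal B L M" "M \<noteq> {0}"
  shows "1 \<notin> t_closure A K (M \<inter> A)"
proof
  have Mi: "ideal_of B M" "M \<noteq> B" "t_ideal B L M" using M(1) unfolding t_maximal_def by auto
  assume "1 \<in> t_closure A K (M \<inter> A)"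
  then obtain S where S: "finite S" "S \<noteq> {}" "S \<subseteq> M \<inter> A - {0}" "1 \<in> v_closure A K S"
    unfolding mem_t_closure_iff[OF qfA] by blast
  then have "1 \<in> v_closure B L S"
    by (intro one_in_v_closure_lift[OF qfA quotient_field_subfield[OF qfB] rep centers]) auto
  then have "1 \<in> t_closure B L M" unfolding mem_t_closure_iff[OF qfB] using S by blast
  then show False using t_closure_t_ideal[OF Mi(3) M(2)] ideal_eq_if_one[OF Mi(1)] Mi(2) by simp
qed

lemma t_maximal_localization_valuation_domain:
  assumes alg: "algebraic_ext K L" and pvA: "PvMD A K" and qfB: "quotient_field B L"
    and AB: "A \<subseteq> B" and ic: "integrally_closed B L"
    and rep: "essential_representation B L \<V>"
    and centers: "\<forall>V\<in>\<V>. t_ideal A K (max_ideal_val V \<inter> A)"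
    and M: "t_maximal B L M"
  shows "valuation_domain (localization B M) L"
proof -
  interpret prime_localization B L M using qfB t_maximal_prime[OF qfB M] by unfold_locales
  have qfA: "quotient_field A K" using pvA unfolding PvMD_def by blast
  have "x \<in> BM \<or> inverse x \<in> BM" if x: "x \<in> L" for x
  proof (cases "M = {0}")
    case True
    then show ?thesis using quotient_field_fraction[OF qfB x] unfolding mem_BM_iff by blast
  next
    case False
    have "M \<inter> A \<noteq> {0}" by (rule contraction_nonzero[OF alg qfA qfB AB ideal_M False])
    moreover have "ideal_of A (M \<inter> A)"
      by (rule ideal_contraction[OF quotient_field_subring[OF qfA] AB ideal_M])
    ultimately obtain Q where Q: "t_maximal A K Q" "M \<inter> A \<subseteq> Q"
      using exists_t_maximal_above[OF qfA] one_notin_t_closure_contraction[OF qfA qfB rep centers M False]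
      by blast
    have "valuation_domain (localization A Q) K" using pvA Q(1) unfolding PvMD_def by blast
    moreover obtain p where "p \<noteq> 0" "\<forall>i. coeff p i \<in> K" "poly p x = 0"
      using alg x unfolding algebraic_ext_def by blast
    moreover have "subfield K" using alg unfolding algebraic_ext_def by blast
    ultimately show ?thesis
      using algebraic_dichotomy[OF ic _ _ localization_mono[OF AB Q(2)] x] by blast
  qed
  then show ?thesis unfolding valuation_domain_def using subring_BM BM_subset by blast
qed

theorem corollary2p11:
  fixes K L A B :: "'a::field set" and \<V> :: "'a set set"
  assumes "algebraic_ext K L"
    and "PvMD A K"
    and "quotient_field B L"
    and "A \<subseteq> B"
    and "integrally_closed B L"
    and "essential_domain B L"
    and "essential_representation B L \<V>"
    and "\<forall>V\<in>\<V>. t_ideal A K (max_ideal_val V \<inter> A)"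
  shows "PvMD B L"
  \<comment> \<open>essential_domain B L is implied by the representation and not used\<close>
  using assms(3) t_maximal_localization_valuation_domain[OF assms(1-5,7,8)]
  unfolding PvMD_def by blast

end
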